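(* Let $X$ be a Banach space with a normalized $1$-unconditional basis $(e_i)_i$ not equivalent to the standard basis of $c_0$, and let $q\le p$ in $[1,\infty]$, $q<\infty$, be such that $X$ satisfies lower $p$ and upper $q$ estimates on block sequences with constant one. Let $\varepsilon>0$ and $d\in\mathbb{N}$. Let $P\subseteq\mathbb{N}$ satisfy $\psi_P(k)\ge\frac12(\psi(k)-1)$ for all $k\in\mathbb{N}$, and let $M=\{k_j\}_{j=1}^\infty\subseteq\mathbb{N}$ (with $k_1<k_2<\cdots$) satisfy \[\psi(k_{j+1})\geq\Big(\frac{8d^{1/q-1/p}}{\varepsilon}+2\Big)\psi(k_j)+1\quad\text{for all } j.\] Then for all $\bar m=(m_1,\dots,m_d),\bar n=(n_1,\dots,n_d)\in[M]^d$ with $m_1<n_1<m_2<n_2<\dots<m_d<n_d$, all $(\lambda_s)_{s=1}^d\subseteq\mathbb{R}$, and each $Q\in\{P,P^c\}$: \[\Big\|\sum_{s=1}^d\lambda_s1_{(n_{s-1},n_s]\cap Q}\Big\|_X\le1\implies\Big\|\sum_{s=1}^d\lambda_s1_{(n_{s-1},m_s]}\Big\|_X\le\frac\varepsilon4,\] \[\Big\|\sum_{s=1}^d\lambda_s1_{(m_{s-1},m_s]\cap Q}\Big\|_X\le1\implies\Big\|\sum_{s=1}^d\lambda_s1_{(m_{s-1},n_{s-1}]}\Big\|_X\le\frac\varepsilon4,\] where $m_0=n_0=0$.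
   Context: Identify finitely supported real sequences with elements of $X$ via $(e_i)$; for finite $A\subseteq\mathbb{N}$, $1_A=\sum_{i\in A}e_i$, and $1_{(a,b]}$ means $1_{\{i\in\mathbb{N}:a<i\le b\}}$. $\psi(k)=\|1_{[1,k]}\|_X$; $\psi_P(k)=\min\{\|1_{[1,k]\cap P}\|_X,\|1_{[1,k]\cap P^c}\|_X\}$, $P^c=\mathbb{N}\setminus P$. $[M]^d$ is the set of $d$-tuples $(n_1,\dots,n_d)\in M^d$ with $n_1<\dots<n_d$. A block sequence $(x_i)_{i=1}^n$ is one with $x_i\in\mathrm{span}\{e_j: s_i\le j<s_{i+1}\}$ for some $s_1<\dots<s_{n+1}$. Lower $p$ and upper $q$ estimates with constant one: $(\sum_i\|x_i\|_X^p)^{1/p}\le\|\sum_ix_i\|_X\le(\sum_i\|x_i\|_X^q)^{1/q}$ for every block sequence (with the usual modification for $p=\infty$). Normalized: $\|e_i\|_X=1$; $1$-unconditional: $\|\sum a_ie_i\|\le\|\sum b_ie_i\|$ whenever $|a_i|\le|b_i|$. *)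

theory Defs
  imports "HOL-Analysis.Analysis" "HOL-Library.Extended_Real"
begin

text \<open>Elements of X are identified with finitely supported real sequences indexed by
  the positive naturals (basis vectors e_i, i >= 1); index 0 is not used.
  The Banach space X is the completion of this normed space; all statements only
  involve finitely supported vectors.\<close>

definition fsvec :: "(nat \<Rightarrow> real) \<Rightarrow> bool" where
  "fsvec x \<longleftrightarrow> finite {i. x i \<noteq> 0} \<and> x 0 = 0"

definition is_norm_c00 :: "((nat \<Rightarrow> real) \<Rightarrow> real) \<Rightarrow> bool" where
  "is_norm_c00 N \<longleftrightarrow>
     (\<forall>x. fsvec x \<longrightarrow> 0 \<le> N x \<and> (N x = 0 \<longleftrightarrow> x = (\<lambda>_. 0))) \<and>
     (\<forall>x c. fsvec x \<longrightarrow> N (\<lambda>i. c * x i) = \<bar>c\<bar> * N x) \<and>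
     (\<forall>x y. fsvec x \<longrightarrow> fsvec y \<longrightarrow> N (\<lambda>i. x i + y i) \<le> N x + N y)"

definition basis_vec :: "nat \<Rightarrow> nat \<Rightarrow> real" ("e") where
  "e j = (\<lambda>i. if i = j then 1 else 0)"

definition normalized :: "((nat \<Rightarrow> real) \<Rightarrow> real) \<Rightarrow> bool" where
  "normalized N \<longleftrightarrow> (\<forall>j\<ge>1. N (e j) = 1)"

definition one_unconditional :: "((nat \<Rightarrow> real) \<Rightarrow> real) \<Rightarrow> bool" where
  "one_unconditional N \<longleftrightarrow>
     (\<forall>a b. fsvec a \<longrightarrow> fsvec b \<longrightarrow> (\<forall>i. \<bar>a i\<bar> \<le> \<bar>b i\<bar>) \<longrightarrow> N a \<le> N b)"

definition supnorm :: "(nat \<Rightarrow> real) \<Rightarrow> real" where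
  "supnorm a = Max (insert 0 ((\<lambda>i. \<bar>a i\<bar>) ` {i. a i \<noteq> 0}))"

definition equiv_c0 :: "((nat \<Rightarrow> real) \<Rightarrow> real) \<Rightarrow> bool" where
  "equiv_c0 N \<longleftrightarrow> (\<exists>c C. 0 < c \<and> 0 < C \<and>
     (\<forall>a. fsvec a \<longrightarrow> c * supnorm a \<le> N a \<and> N a \<le> C * supnorm a))"

definition block_seq :: "nat \<Rightarrow> (nat \<Rightarrow> nat \<Rightarrow> real) \<Rightarrow> bool" where
  "block_seq n x \<longleftrightarrow> (\<exists>s :: nat \<Rightarrow> nat. strict_mono s \<and> 1 \<le> s 0 \<and>
     (\<forall>i<n. \<forall>j. x i j \<noteq> 0 \<longrightarrow> s i \<le> j \<and> j < s (Suc i)))"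

definition vsum :: "nat \<Rightarrow> (nat \<Rightarrow> nat \<Rightarrow> real) \<Rightarrow> nat \<Rightarrow> real" where
  "vsum n x = (\<lambda>j. \<Sum>i<n. x i j)"

definition lower_est :: "((nat \<Rightarrow> real) \<Rightarrow> real) \<Rightarrow> ereal \<Rightarrow> bool" where
  "lower_est N p \<longleftrightarrow> (\<forall>n x. block_seq n x \<longrightarrow>
     (if p = \<infinity> then (\<forall>i<n. N (x i) \<le> N (vsum n x))
      else (\<Sum>i<n. N (x i) powr real_of_ereal p) powr (1 / real_of_ereal p) \<le> N (vsum n x)))"

definition upper_est :: "((nat \<Rightarrow> real) \<Rightarrow> real) \<Rightarrow> real \<Rightarrow> bool" where
  "upper_est N q \<longleftrightarrow> (\<forall>n x. block_seq n x \<longrightarrow>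
     N (vsum n x) \<le> (\<Sum>i<n. N (x i) powr q) powr (1 / q))"

definition inv_ereal :: "ereal \<Rightarrow> real" where
  "inv_ereal p = (if p = \<infinity> then 0 else 1 / real_of_ereal p)"

definition psi :: "((nat \<Rightarrow> real) \<Rightarrow> real) \<Rightarrow> nat \<Rightarrow> real" where
  "psi N k = N (indicator {1..k})"

definition psiP :: "((nat \<Rightarrow> real) \<Rightarrow> real) \<Rightarrow> nat set \<Rightarrow> nat \<Rightarrow> real" where
  "psiP N P k = min (N (indicator ({1..k} \<inter> P))) (N (indicator ({1..k} - P)))"

end

theory Submission
  imports Defs
begin

text \<open>Put K = 4 d powr (1/q - 1/p) / \<epsilon>. For a \<le> c < b with c, b \<in> M, the hypothesis on P
  and the growth of \<psi> along M give \<parallel>1_((a,b] \<inter> Q)\<parallel> \<ge> (\<psi> b - 1)/2 - \<psi> c \<ge> K \<psi> c, while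
  by unconditionality every indicator supported in [1,c] has norm at most \<psi> c. Hence each block
  of the sum to be estimated is dominated, up to the factor K, by the corresponding block of the
  sum of norm at most one. The upper q estimate, together with the lower p estimate turned into
  a lower q estimate with constant d powr (1/q - 1/p) by the power mean inequality, transfers
  this domination to the sums.\<close>

lemma fsvecI:
  assumes "finite B" "0 \<notin> B" "\<And>i. i \<notin> B \<Longrightarrow> x i = 0"
  shows "fsvec x"
  using assms unfolding fsvec_def by (metis (mono_tags, lifting) finite_subset mem_Collect_eq subsetI)

lemma fsvec_indicator: "A \<subseteq> {1..b} \<Longrightarrow> fsvec (indicator A)"
  by (rule fsvecI[of "{1..b}"]) (auto simp: indicator_def)

locale unconditional_c00_norm =
  fixes N :: "(nat \<Rightarrow> real) \<Rightarrow> real"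
  assumes is_norm: "is_norm_c00 N" and unconditional: "one_unconditional N"
begin

lemma nonneg: "fsvec x \<Longrightarrow> 0 \<le> N x"
  using is_norm by (simp add: is_norm_c00_def)

lemma homogeneous: "fsvec x \<Longrightarrow> N (\<lambda>i. c * x i) = \<bar>c\<bar> * N x"
  using is_norm by (simp add: is_norm_c00_def)

lemma triangle: "fsvec x \<Longrightarrow> fsvec y \<Longrightarrow> N (\<lambda>i. x i + y i) \<le> N x + N y"
  using is_norm by (simp add: is_norm_c00_def)

lemma indicator_le_psi: "A \<subseteq> {1..b} \<Longrightarrow> N (indicator A) \<le> psi N b"
  unfolding psi_def
  by (rule unconditional[unfolded one_unconditional_def, rule_format])
     (auto intro!: fsvec_indicator simp: indicator_def)

lemma psi_mono: "a \<le> b \<Longrightarrow> psi N a \<le> psi N b"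
  unfolding psi_def[of N a] by (rule indicator_le_psi) auto

lemma psi_0: "psi N 0 = 0"
  using is_norm by (simp add: psi_def is_norm_c00_def fsvec_def indicator_def fun_eq_iff)

end

lemma growth_on_range:
  fixes f :: "nat \<Rightarrow> real"
  assumes "mono f" "strict_mono k" "\<forall>j. C * f (k j) + 1 \<le> f (k (Suc j))"
    and "x \<in> range k" "y \<in> range k" "x < y"
  shows "C * f x + 1 \<le> f y"
proof -
  obtain i j where ij: "x = k i" "y = k j" using assms(4,5) by auto
  with assms(2,6) have "k (Suc i) \<le> k j"
    by (metis Suc_leI strict_mono_less strict_mono_less_eq)
  then show ?thesis using assms(1,3) ij by (metis monoD order_trans)
qed

lemma vsum_shift: "vsum d (\<lambda>i. x (Suc i)) = (\<lambda>j. \<Sum>s=1..d. x s j)"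
  unfolding vsum_def
  by (simp add: sum.atLeast1_atMost_eq lessThan_atLeast0)

lemma block_seq_intervals:
  assumes incr: "\<forall>s\<in>{1..d}. a (s - 1) < a s"
    and supp: "\<forall>s\<in>{1..d}. \<forall>j. x s j \<noteq> 0 \<longrightarrow> j \<in> {a (s - 1)<..a s}"
  shows "block_seq d (\<lambda>i. x (Suc i))"
proof -
  define t where "t i = a (min i d) + 1 + (i - d)" for i
  have "t i < t (Suc i)" for i
    using incr[rule_format, of "Suc i"] by (cases "i < d") (auto simp: t_def min_def Suc_diff_le)
  then have "strict_mono t" by (rule strict_monoI_Suc)
  moreover have "t i \<le> j \<and> j < t (Suc i)" if "i < d" "x (Suc i) j \<noteq> 0" for i j
    using supp[rule_format, of "Suc i" j] that by (auto simp: t_def min_def)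
  ultimately show ?thesis unfolding block_seq_def by (intro exI[of _ t]) (simp add: t_def)
qed

lemma powr_sum_le_card_powr_sum_powr:
  fixes b :: "'a \<Rightarrow> real"
  assumes S: "finite S" and b: "\<And>i. i \<in> S \<Longrightarrow> 0 \<le> b i" and t: "1 \<le> t"
  shows "(\<Sum>i\<in>S. b i) powr t \<le> real (card S) powr (t - 1) * (\<Sum>i\<in>S. b i powr t)"
proof -
  define S' where "S' = {i\<in>S. 0 < b i}"
  have S': "finite S'" "S' \<subseteq> S" using S by (auto simp: S'_def)
  have sum_S': "(\<Sum>i\<in>S. b i) = (\<Sum>i\<in>S'. b i)"
    "(\<Sum>i\<in>S. b i powr t) = (\<Sum>i\<in>S'. b i powr t)"
    by (rule sum.mono_neutral_right[OF S S'(2)], use b in \<open>force simp: S'_def\<close>)+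
  show ?thesis
  proof (cases "S' = {}")
    case True
    then show ?thesis using sum_S' t by simp
  next
    case False
    define c where "c = real (card S')"
    have card: "0 < card S'" using False S'(1) card_gt_0_iff by blast
    then have c: "1 \<le> c" by (simp add: c_def)
    have "(\<lambda>x. x powr t) (\<Sum>i\<in>S'. (1/c) *\<^sub>R b i) \<le> (\<Sum>i\<in>S'. (1/c) * b i powr t)"
      by (rule convex_on_sum[OF S'(1) False powr_convex[OF t]]) (use card in \<open>auto simp: c_def S'_def\<close>)
    then have "(\<Sum>i\<in>S'. b i) powr t / c powr t \<le> (\<Sum>i\<in>S'. b i powr t) / c"
      using c by (simp add: powr_divide sum_nonneg S'_def flip: sum_divide_distrib sum_distrib_left)
    then have "(\<Sum>i\<in>S'. b i) powr t \<le> c powr (t - 1) * (\<Sum>i\<in>S'. b i powr t)"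
      using c by (simp add: powr_diff divide_le_eq field_simps)
    also have "\<dots> \<le> real (card S) powr (t - 1) * (\<Sum>i\<in>S'. b i powr t)"
      using t c card_mono[OF S S'(2)] by (intro mult_right_mono powr_mono2 sum_nonneg) (auto simp: c_def)
    finally show ?thesis using sum_S' by simp
  qed
qed

lemma power_mean_inequality:
  fixes a :: "'a \<Rightarrow> real"
  assumes S: "finite S" and a: "\<And>i. i \<in> S \<Longrightarrow> 0 \<le> a i" and q: "1 \<le> q" "q \<le> r"
  shows "(\<Sum>i\<in>S. a i powr q) powr (1/q)
    \<le> real (card S) powr (1/q - 1/r) * (\<Sum>i\<in>S. a i powr r) powr (1/r)"
proof -
  have "(\<Sum>i\<in>S. a i powr q) powr (r/q)
      \<le> real (card S) powr (r/q - 1) * (\<Sum>i\<in>S. (a i powr q) powr (r/q))"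
    using q by (intro powr_sum_le_card_powr_sum_powr S) auto
  also have "(\<Sum>i\<in>S. (a i powr q) powr (r/q)) = (\<Sum>i\<in>S. a i powr r)"
    using q by (simp add: powr_powr)
  finally have "((\<Sum>i\<in>S. a i powr q) powr (r/q)) powr (1/r)
      \<le> (real (card S) powr (r/q - 1) * (\<Sum>i\<in>S. a i powr r)) powr (1/r)"
    using q by (intro powr_mono2) auto
  also have "\<dots> = real (card S) powr ((r/q - 1) / r) * (\<Sum>i\<in>S. a i powr r) powr (1/r)"
    by (simp add: powr_mult powr_powr sum_nonneg)
  also have "(r/q - 1) / r = 1/q - 1/r" using q by (simp add: field_simps)
  finally show ?thesis using q by (simp add: powr_powr)
qed

lemma lower_est_imp_lower_q_est:
  assumes low: "lower_est N p" and q: "1 \<le> q" "ereal q \<le> p"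
    and x: "block_seq d x" "\<forall>i<d. 0 \<le> N (x i)"
  shows "(\<Sum>i<d. N (x i) powr q) powr (1/q) \<le> real d powr (1/q - inv_ereal p) * N (vsum d x)"
proof (cases "p = \<infinity>")
  case True
  then have le_sum: "\<forall>i<d. N (x i) \<le> N (vsum d x)"
    using low x(1) by (simp add: lower_est_def)
  show ?thesis
  proof (cases "d = 0")
    case False
    then have "0 \<le> N (vsum d x)" using le_sum x(2) by (meson order_trans zero_less_iff_neq_zero)
    have "(\<Sum>i<d. N (x i) powr q) \<le> (\<Sum>i<d. N (vsum d x) powr q)"
      using le_sum x(2) q by (intro sum_mono powr_mono2) auto
    then have "(\<Sum>i<d. N (x i) powr q) powr (1/q) \<le> (real d * N (vsum d x) powr q) powr (1/q)"
      using q by (intro powr_mono2) (auto simp: sum_nonneg)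
    also have "\<dots> = real d powr (1/q) * N (vsum d x)"
      using q \<open>0 \<le> N (vsum d x)\<close> by (simp add: powr_mult powr_powr)
    finally show ?thesis using True by (simp add: inv_ereal_def)
  qed simp
next
  case False
  then obtain r where r: "p = ereal r" using q(2) by (cases p) auto
  have "(\<Sum>i<d. N (x i) powr q) powr (1/q) \<le> real d powr (1/q - 1/r) * (\<Sum>i<d. N (x i) powr r) powr (1/r)"
    using power_mean_inequality[of "{..<d}" "\<lambda>i. N (x i)" q r] x(2) q r by simp
  also have "\<dots> \<le> real d powr (1/q - 1/r) * N (vsum d x)"
    using low x(1) r by (intro mult_left_mono) (auto simp: lower_est_def)
  finally show ?thesis using r by (simp add: inv_ereal_def)
qed

lemma block_domination_transfer:
  assumes low: "lower_est N p" and up: "upper_est N q" and q: "1 \<le> q" "ereal q \<le> p"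
    and blocks: "block_seq d x" "block_seq d y"
    and K: "0 \<le> K" and y: "\<forall>i<d. 0 \<le> N (y i)" and dom: "\<forall>i<d. K * N (y i) \<le> N (x i)"
  shows "K * N (vsum d y) \<le> real d powr (1/q - inv_ereal p) * N (vsum d x)"
proof -
  have "K * N (vsum d y) \<le> K * (\<Sum>i<d. N (y i) powr q) powr (1/q)"
    using up blocks(2) K by (intro mult_left_mono) (auto simp: upper_est_def)
  also have "\<dots> = (\<Sum>i<d. (K * N (y i)) powr q) powr (1/q)"
    using K y q by (simp add: powr_mult powr_powr sum_nonneg flip: sum_distrib_left)
  also have "\<dots> \<le> (\<Sum>i<d. N (x i) powr q) powr (1/q)"
    using K y dom q by (intro powr_mono2 sum_mono sum_nonneg) auto
  also have "\<dots> \<le> real d powr (1/q - inv_ereal p) * N (vsum d x)"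
    using dom K y by (intro lower_est_imp_lower_q_est low q blocks(1)) (meson order_trans mult_nonneg_nonneg)
  finally show ?thesis .
qed

context unconditional_c00_norm
begin

lemma indicator_sums_transfer:
  assumes est: "lower_est N p" "upper_est N q" "1 \<le> q" "ereal q \<le> p" and K: "0 \<le> K"
    and incr: "\<forall>s\<in>{1..d}. a (s - 1) < a s"
    and sets: "\<forall>s\<in>{1..d}.
      T s \<subseteq> {a (s - 1)<..a s} \<and> U s \<subseteq> {a (s - 1)<..a s} \<and> U s \<subseteq> {1..c s}"
    and dom: "\<forall>s\<in>{1..d}. K * psi N (c s) \<le> N (indicator (T s))"
  shows "K * N (\<lambda>i. \<Sum>s=1..d. lam s * indicator (U s) i)
    \<le> real d powr (1/q - inv_ereal p) * N (\<lambda>i. \<Sum>s=1..d. lam s * indicator (T s) i)"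
proof -
  define x where "x s = (\<lambda>j. lam s * indicator (T s) j)" for s
  define y where "y s = (\<lambda>j. lam s * indicator (U s) j)" for s
  have fsvec: "fsvec (indicator (T s))" "fsvec (indicator (U s))" if "s \<in> {1..d}" for s
    using sets[rule_format, OF that] by (auto intro!: fsvec_indicator[of _ "a s"])
  have "block_seq d (\<lambda>i. x (Suc i))" "block_seq d (\<lambda>i. y (Suc i))"
    using sets by (intro block_seq_intervals[OF incr]; fastforce simp: x_def y_def indicator_def)+
  moreover have "K * N (y s) \<le> N (x s)" if "s \<in> {1..d}" for s
  proof -
    have "K * N (indicator (U s)) \<le> K * psi N (c s)"
      using sets that K by (intro mult_left_mono indicator_le_psi) auto
    then have "K * N (indicator (U s)) \<le> N (indicator (T s))"
      using dom[rule_format, OF that] by linarith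
    from mult_left_mono[OF this abs_ge_zero] show ?thesis
      using fsvec[OF that] by (simp add: x_def y_def homogeneous mult.left_commute)
  qed
  moreover have "0 \<le> N (y s)" if "s \<in> {1..d}" for s
    using fsvec[OF that] by (simp add: y_def homogeneous nonneg)
  ultimately have "K * N (vsum d (\<lambda>i. y (Suc i)))
      \<le> real d powr (1/q - inv_ereal p) * N (vsum d (\<lambda>i. x (Suc i)))"
    by (intro block_domination_transfer[OF est _ _ K]) auto
  then show ?thesis unfolding vsum_shift by (simp only: x_def y_def)
qed

lemma norm_indicator_interval_ge:
  assumes Q: "(psi N b - 1) / 2 \<le> N (indicator ({1..b} \<inter> Q))"
    and "a \<le> c" "a < b" and growth: "(2 * K + 2) * psi N c + 1 \<le> psi N b"
  shows "K * psi N c \<le> N (indicator ({a<..b} \<inter> Q))"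
proof -
  have split: "indicator ({1..b} \<inter> Q)
      = (\<lambda>i. indicator ({a<..b} \<inter> Q) i + indicator ({1..a} \<inter> Q) i :: real)"
    using \<open>a < b\<close> by (auto simp: indicator_def fun_eq_iff)
  have "N (indicator ({1..b} \<inter> Q)) \<le> N (indicator ({a<..b} \<inter> Q)) + N (indicator ({1..a} \<inter> Q))"
    unfolding split by (rule triangle; rule fsvec_indicator[of _ b]) (use \<open>a < b\<close> in auto)
  also have "N (indicator ({1..a} \<inter> Q)) \<le> psi N c"
    using indicator_le_psi[of "{1..a} \<inter> Q" a] psi_mono[OF \<open>a \<le> c\<close>] by auto
  finally show ?thesis using Q growth by (simp add: algebra_simps)
qed

lemma norm_indicator_interval_ge_on_range:
  assumes P: "\<forall>j\<ge>1. (psi N j - 1) / 2 \<le> psiP N P j" and Q: "Q \<in> {P, - P}"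
    and k: "strict_mono k" "\<forall>j. (2 * K + 2) * psi N (k j) + 1 \<le> psi N (k (Suc j))"
    and "a \<le> c" "c < b" "c \<in> insert 0 (range k)" "b \<in> range k"
  shows "K * psi N c \<le> N (indicator ({a<..b} \<inter> Q))"
proof (cases "c = 0")
  case True
  have "fsvec (indicator ({a<..b} \<inter> Q))" by (rule fsvec_indicator[of _ b]) auto
  then show ?thesis using True by (simp add: psi_0 nonneg)
next
  case False
  have "psiP N P b \<le> N (indicator ({1..b} \<inter> Q))"
    using Q by (auto simp: psiP_def Diff_eq)
  then have "(psi N b - 1) / 2 \<le> N (indicator ({1..b} \<inter> Q))"
    using P[rule_format, of b] \<open>c < b\<close> by simp
  moreover have "(2 * K + 2) * psi N c + 1 \<le> psi N b"
    using False assms(7,8) \<open>c < b\<close> by (intro growth_on_range[OF _ k]) (auto intro: monoI psi_mono)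
  ultimately show ?thesis
    using \<open>a \<le> c\<close> \<open>c < b\<close> by (intro norm_indicator_interval_ge) auto
qed

end

locale lacunary_setting = unconditional_c00_norm N for N +
  fixes p :: ereal and q :: real and \<epsilon> :: real and d :: nat and P :: "nat set" and k :: "nat \<Rightarrow> nat"
  assumes exponents: "1 \<le> q" "ereal q \<le> p"
    and lower: "lower_est N p" and upper: "upper_est N q"
    and eps: "0 < \<epsilon>" and d: "1 \<le> d"
    and balanced: "\<forall>j\<ge>1. (psi N j - 1) / 2 \<le> psiP N P j"
    and k_mono: "strict_mono k"
    and lacunary: "\<forall>j. (8 * real d powr (1 / q - inv_ereal p) / \<epsilon> + 2) * psi N (k j) + 1
      \<le> psi N (k (Suc j))"
begin

lemma indicator_sums_estimate:
  assumes Q: "Q \<in> {P, - P}"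
    and bounds: "\<forall>s\<in>{1..d}.
      a (s - 1) \<le> c s \<and> c s < a s \<and> c s \<in> insert 0 (range k) \<and> a s \<in> range k"
    and T: "N (\<lambda>i. \<Sum>s=1..d. lam s * indicator ({a (s - 1)<..a s} \<inter> Q) i) \<le> 1"
  shows "N (\<lambda>i. \<Sum>s=1..d. lam s * indicator {a (s - 1)<..c s} i) \<le> \<epsilon> / 4"
proof -
  define D where "D = real d powr (1 / q - inv_ereal p)"
  define K where "K = 4 * D / \<epsilon>"
  have D: "0 \<le> D" by (simp add: D_def)
  have K: "0 < K" using eps d by (simp add: K_def D_def)
  have "\<forall>j. (2 * K + 2) * psi N (k j) + 1 \<le> psi N (k (Suc j))"
    using lacunary by (simp add: K_def D_def)
  note interval_ge = norm_indicator_interval_ge_on_range[OF balanced Q k_mono this]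
  have "K * N (\<lambda>i. \<Sum>s=1..d. lam s * indicator {a (s - 1)<..c s} i)
      \<le> D * N (\<lambda>i. \<Sum>s=1..d. lam s * indicator ({a (s - 1)<..a s} \<inter> Q) i)"
    unfolding D_def
  proof (rule indicator_sums_transfer[OF lower upper exponents, where c = c])
    show "\<forall>s\<in>{1..d}. K * psi N (c s) \<le> N (indicator ({a (s - 1)<..a s} \<inter> Q))"
      using bounds by (auto intro!: interval_ge)
    show "\<forall>s\<in>{1..d}. a (s - 1) < a s" using bounds by force
    show "\<forall>s\<in>{1..d}. {a (s - 1)<..a s} \<inter> Q \<subseteq> {a (s - 1)<..a s} \<and>
        {a (s - 1)<..c s} \<subseteq> {a (s - 1)<..a s} \<and> {a (s - 1)<..c s} \<subseteq> {1..c s}"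
      using bounds by fastforce
  qed (use K in simp)
  also have "\<dots> \<le> D" using T D by (simp add: mult_left_le)
  finally show ?thesis using K eps by (simp add: K_def field_simps)
qed

lemma interlaced_estimates:
  fixes m n :: "nat \<Rightarrow> nat"
  assumes Q: "Q \<in> {P, - P}" and m0: "m 0 = 0" and n0: "n 0 = 0"
    and M: "\<forall>s\<in>{1..d}. m s \<in> range k \<and> n s \<in> range k"
    and interlaced: "\<forall>s\<in>{1..d}. n (s - 1) < m s \<and> m s < n s"
  shows "N (\<lambda>i. \<Sum>s=1..d. lam s * indicator ({n (s - 1)<..n s} \<inter> Q) i) \<le> 1 \<Longrightarrow>
      N (\<lambda>i. \<Sum>s=1..d. lam s * indicator {n (s - 1)<..m s} i) \<le> \<epsilon> / 4"
    and "N (\<lambda>i. \<Sum>s=1..d. lam s * indicator ({m (s - 1)<..m s} \<inter> Q) i) \<le> 1 \<Longrightarrow>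
      N (\<lambda>i. \<Sum>s=1..d. lam s * indicator {m (s - 1)<..n (s - 1)} i) \<le> \<epsilon> / 4"
proof -
  have m_le_n: "m (s - 1) \<le> n (s - 1)" if "s \<in> {1..d}" for s
  proof (cases "s = 1")
    case False
    then have "s - 1 \<in> {1..d}" using that by auto
    then show ?thesis using interlaced by fastforce
  qed (simp add: m0 n0)
  have n_prev: "n (s - 1) \<in> insert 0 (range k)" if "s \<in> {1..d}" for s
    using M n0 that by (cases "s - 1") auto
  show "N (\<lambda>i. \<Sum>s=1..d. lam s * indicator {n (s - 1)<..m s} i) \<le> \<epsilon> / 4"
    if "N (\<lambda>i. \<Sum>s=1..d. lam s * indicator ({n (s - 1)<..n s} \<inter> Q) i) \<le> 1"
    using that interlaced M by (intro indicator_sums_estimate[OF Q]) auto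
  show "N (\<lambda>i. \<Sum>s=1..d. lam s * indicator {m (s - 1)<..n (s - 1)} i) \<le> \<epsilon> / 4"
    if "N (\<lambda>i. \<Sum>s=1..d. lam s * indicator ({m (s - 1)<..m s} \<inter> Q) i) \<le> 1"
    using that interlaced M m_le_n n_prev by (intro indicator_sums_estimate[OF Q]) auto
qed

end

theorem lemma3p2:
  fixes N :: "(nat \<Rightarrow> real) \<Rightarrow> real"
    and p :: ereal and q :: real and \<epsilon> :: real and d :: nat
    and P :: "nat set" and k :: "nat \<Rightarrow> nat"
  assumes norm: "is_norm_c00 N"
    and normal: "normalized N"
    and uncond: "one_unconditional N"
    and not_c0: "\<not> equiv_c0 N"
    and pq: "1 \<le> q" "ereal q \<le> p"
    and low: "lower_est N p"
    and up: "upper_est N q"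
    and eps: "\<epsilon> > 0"
    and d: "d \<ge> 1"
    and Pprop: "\<forall>j\<ge>1. psiP N P j \<ge> (psi N j - 1) / 2"
    and kmono: "strict_mono k" and k0: "k 0 \<ge> 1"
    and kgrowth: "\<forall>j. psi N (k (Suc j)) \<ge>
        (8 * real d powr (1 / q - inv_ereal p) / \<epsilon> + 2) * psi N (k j) + 1"
  shows "\<forall>m n :: nat \<Rightarrow> nat. \<forall>lam :: nat \<Rightarrow> real. \<forall>Q \<in> {P, - P}.
     (m 0 = 0 \<and> n 0 = 0 \<and> (\<forall>s\<in>{1..d}. m s \<in> range k \<and> n s \<in> range k) \<and>
      (\<forall>s\<in>{1..d}. n (s - 1) < m s \<and> m s < n s)) \<longrightarrow>
     (N (\<lambda>i. \<Sum>s=1..d. lam s * indicator ({n (s - 1)<..n s} \<inter> Q) i) \<le> 1 \<longrightarrow>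
        N (\<lambda>i. \<Sum>s=1..d. lam s * indicator {n (s - 1)<..m s} i) \<le> \<epsilon> / 4) \<and>
     (N (\<lambda>i. \<Sum>s=1..d. lam s * indicator ({m (s - 1)<..m s} \<inter> Q) i) \<le> 1 \<longrightarrow>
        N (\<lambda>i. \<Sum>s=1..d. lam s * indicator {m (s - 1)<..n (s - 1)} i) \<le> \<epsilon> / 4)"
proof -
  interpret lacunary_setting N p q \<epsilon> d P k
    using assms by unfold_locales auto
  show ?thesis
    by (intro allI ballI impI conjI; elim conjE; rule interlaced_estimates; assumption)
qed

end
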